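(* Let $G,H,\widetilde H\subseteq\mathbb R^N$ be measurable sets of finite measure, with $|G|>0$, such that $|\widetilde H|=|G|$ and $|H\Delta\widetilde H|=\big||H|-|G|\big|$, and such that $G\cup\widetilde H$ has finite diameter $D'$. Then \[ 2|G\Delta H|\ \geq\ |G\Delta\widetilde H|\ \geq\ \frac{2|G|}{D'}\,\big|\mathrm{bar}(G)-\mathrm{bar}(\widetilde H)\big|\,. \]
   Context: $\Delta$ denotes symmetric difference, $|\cdot|$ Lebesgue measure, and $\mathrm{bar}(A)=\frac1{|A|}\int_A x\,dx$ the barycenter of a set $A$ of finite positive measure. The diameter of a set is in the measure-theoretic sense (supremum of distances between Lebesgue points). *)

theory Defs
  imports "HOL-Analysis.Analysis"
begin

definition symdiff :: "'a set \<Rightarrow> 'a set \<Rightarrow> 'a set" where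
  "symdiff A B = (A - B) \<union> (B - A)"

definition bar :: "'a::euclidean_space set \<Rightarrow> 'a" where
  "bar A = (1 / measure lebesgue A) *\<^sub>R (LINT x:A|lebesgue. x)"

definition lebesgue_point :: "'a::euclidean_space set \<Rightarrow> 'a \<Rightarrow> bool" where
  "lebesgue_point A x \<longleftrightarrow>
     ((\<lambda>r. measure lebesgue (A \<inter> ball x r) / measure lebesgue (ball x r)) \<longlongrightarrow> 1) (at_right 0)"

definition lp_dists :: "'a::euclidean_space set \<Rightarrow> real set" where
  "lp_dists A = {dist x y | x y. lebesgue_point A x \<and> lebesgue_point A y}"

definition ess_diam :: "'a::euclidean_space set \<Rightarrow> real" where
  "ess_diam A = Sup (lp_dists A)"

end

theory Submission
  imports Defs
begin

(* The first inequality is the triangle inequality for the pseudometric |A \<Delta> B| together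
   with ||H| - |G|| <= |G \<Delta> H|.
   For the second, A = G - Ht and B = Ht - G have the same measure |G \<Delta> Ht| / 2, and
   |G| (bar G - bar Ht) = int_A x - int_B x. By Lebesgue's density theorem almost every point of
   G \<union> Ht is a Lebesgue point, so almost all pairs x in A, y in B satisfy |x - y| <= D'.
   For the unit vector u along int_A x - int_B x, integrating u.x <= u.y + D' first over y in B
   and then over x in A gives |int_A x - int_B x| <= |A| D'. *)

lemma fmeasurable_symdiff:
  "A \<in> fmeasurable M \<Longrightarrow> B \<in> fmeasurable M \<Longrightarrow> symdiff A B \<in> fmeasurable M"
  unfolding symdiff_def by (intro fmeasurable.Un fmeasurable_Diff) auto

lemma measure_symdiff_triangle:
  assumes "A \<in> fmeasurable M" "B \<in> fmeasurable M" "C \<in> fmeasurable M"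
  shows "measure M (symdiff A C) \<le> measure M (symdiff A B) + measure M (symdiff B C)"
proof -
  have "measure M (symdiff A C) \<le> measure M (symdiff A B \<union> symdiff B C)"
    using assms fmeasurable_symdiff
    by (intro measure_mono_fmeasurable) (auto simp: symdiff_def)
  also have "\<dots> \<le> measure M (symdiff A B) + measure M (symdiff B C)"
    using assms fmeasurable_symdiff by (intro measure_Un_le) auto
  finally show ?thesis .
qed

lemma abs_measure_diff_le_measure_symdiff:
  assumes "A \<in> fmeasurable M" "B \<in> fmeasurable M"
  shows "\<bar>measure M A - measure M B\<bar> \<le> measure M (symdiff A B)"
proof -
  have AB: "symdiff A B \<in> fmeasurable M" using assms by (rule fmeasurable_symdiff)
  have bound: "measure M X \<le> measure M Y + measure M (symdiff A B)"
    if "X \<in> fmeasurable M" "Y \<in> fmeasurable M" "X \<subseteq> Y \<union> symdiff A B" for X Y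
  proof -
    have "measure M X \<le> measure M (Y \<union> symdiff A B)"
      using that AB by (intro measure_mono_fmeasurable fmeasurable.Un) auto
    also have "\<dots> \<le> measure M Y + measure M (symdiff A B)"
      using that AB by (intro measure_Un_le fmeasurableD)
    finally show ?thesis .
  qed
  have "A \<subseteq> B \<union> symdiff A B" "B \<subseteq> A \<union> symdiff A B"
    by (auto simp: symdiff_def)
  with bound[OF assms] bound[OF assms(2,1)] show ?thesis
    unfolding abs_le_iff by linarith
qed

lemma measure_Diff_commute:
  assumes "A \<in> fmeasurable M" "B \<in> fmeasurable M" "measure M A = measure M B"
  shows "measure M (A - B) = measure M (B - A)"
  using measure_Un2[OF assms(1,2)] measure_Un2[OF assms(2,1)] assms(3)
  by (simp add: Un_commute)

lemma measure_symdiff_eq_double: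
  assumes "A \<in> fmeasurable M" "B \<in> fmeasurable M" "measure M A = measure M B"
  shows "measure M (symdiff A B) = 2 * measure M (A - B)"
proof -
  have "measure M (symdiff A B) = measure M (A - B) + measure M (B - A)"
    unfolding symdiff_def using fmeasurable_Diff[of A M B] fmeasurable_Diff[of B M A] assms(1,2)
    by (intro measure_Union) (auto simp: fmeasurable_def)
  with measure_Diff_commute[OF assms] show ?thesis by simp
qed

definition low_density_points :: "'a::euclidean_space set \<Rightarrow> real \<Rightarrow> 'a set" where
  "low_density_points S t = {x\<in>S. \<forall>d>0. \<exists>r. 0 < r \<and> r < d \<and>
     measure lebesgue (S \<inter> ball x r) \<le> (1 - t) * measure lebesgue (ball x r)}"

lemma low_density_points_antimono:
  "s \<le> t \<Longrightarrow> low_density_points S t \<subseteq> low_density_points S s"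
  unfolding low_density_points_def
  by (force intro: order_trans mult_right_mono)

lemma measure_UN_low_density_le:
  assumes S: "S \<in> sets M" and I: "finite I" and B: "\<And>i. i \<in> I \<Longrightarrow> B i \<in> fmeasurable M"
    and disj: "pairwise (\<lambda>i j. disjnt (B i) (B j)) I"
    and low: "\<And>i. i \<in> I \<Longrightarrow> measure M (S \<inter> B i) \<le> (1 - t) * measure M (B i)"
  shows "t * measure M (\<Union>i\<in>I. B i) \<le> measure M ((\<Union>i\<in>I. B i) - S)"
proof -
  have BS: "B i - S \<in> fmeasurable M" if "i \<in> I" for i
    using B[OF that] S by (rule fmeasurable_Diff)
  have "t * measure M (\<Union>i\<in>I. B i) = (\<Sum>i\<in>I. t * measure M (B i))"
    by (simp add: measure_UNION'[OF I B disj] sum_distrib_left)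
  also have "\<dots> \<le> (\<Sum>i\<in>I. measure M (B i - S))"
  proof (rule sum_mono)
    fix i assume i: "i \<in> I"
    have "measure M (B i - S) = measure M (B i - (S \<inter> B i))"
      by (rule arg_cong[where f = "measure M"]) blast
    also have "\<dots> = measure M (B i) - measure M (S \<inter> B i)"
      using B[OF i] S by (intro measure_Diff) (auto simp: fmeasurable_def)
    finally
    show "t * measure M (B i) \<le> measure M (B i - S)"
      using low[OF i] by (simp add: algebra_simps)
  qed
  also have "\<dots> = measure M (\<Union>i\<in>I. B i - S)"
  proof (rule measure_UNION'[symmetric])
    show "pairwise (\<lambda>i j. disjnt (B i - S) (B j - S)) I"
      using disj by (rule pairwise_mono) (auto simp: disjnt_def)
  qed (use I BS in auto)
  also have "(\<Union>i\<in>I. B i - S) = (\<Union>i\<in>I. B i) - S" by blast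
  finally show ?thesis .
qed

lemma low_density_points_Vitali_cover:
  fixes S W :: "'a::euclidean_space set"
  assumes W: "open W" "S \<subseteq> W"
  obtains C where "countable C"
    and "C \<subseteq> {(x, r). 0 < r \<and> ball x r \<subseteq> W \<and>
                 measure lebesgue (S \<inter> ball x r) \<le> (1 - t) * measure lebesgue (ball x r)}"
    and "pairwise (\<lambda>i j. disjnt (ball (fst i) (snd i)) (ball (fst j) (snd j))) C"
    and "negligible (low_density_points S t - (\<Union>i\<in>C. ball (fst i) (snd i)))"
proof (rule Vitali_covering_theorem_balls[of "low_density_points S t" _ fst snd])
  let ?\<mu> = "measure lebesgue"
  fix x and d :: real
  assume x: "x \<in> low_density_points S t" and d: "0 < d"
  have "x \<in> W" using x W(2) by (auto simp: low_density_points_def)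
  then obtain k where k: "k > 0" "ball x k \<subseteq> W"
    using W(1) openE by blast
  have "\<forall>d>0. \<exists>r>0. r < d \<and> ?\<mu> (S \<inter> ball x r) \<le> (1 - t) * ?\<mu> (ball x r)"
    using x by (simp add: low_density_points_def)
  from this[rule_format, of "min d k"] obtain r
    where r: "0 < r" "r < min d k" "?\<mu> (S \<inter> ball x r) \<le> (1 - t) * ?\<mu> (ball x r)"
    using d k by auto
  have "ball x r \<subseteq> ball x k" using r by (intro subset_ball) auto
  with k have "ball x r \<subseteq> W" by blast
  then show "\<exists>i. i \<in> {(x, r). 0 < r \<and> ball x r \<subseteq> W \<and>
                 ?\<mu> (S \<inter> ball x r) \<le> (1 - t) * ?\<mu> (ball x r)} \<and>
             x \<in> ball (fst i) (snd i) \<and> snd i < d"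
    using r by (intro exI[of _ "(x, r)"]) auto
qed

lemma lmeasurable_superset_if_negligible_Diff:
  assumes "negligible (E - U)" "U \<in> lmeasurable"
  obtains T where "E \<subseteq> T" "T \<in> lmeasurable" "measure lebesgue T = measure lebesgue U"
proof
  show "E \<subseteq> (E - U) \<union> U" by blast
  show "(E - U) \<union> U \<in> lmeasurable"
    by (rule fmeasurable.Un[OF negligible_imp_measurable[OF assms(1)] assms(2)])
  show "measure lebesgue ((E - U) \<union> U) = measure lebesgue U"
    using assms by (intro measure_negligible_symdiff) (auto elim: negligible_subset)
qed

lemma negligible_low_density_points:
  fixes S :: "'a::euclidean_space set"
  assumes S: "S \<in> sets lebesgue" and t: "0 < t"
  shows "negligible (low_density_points S t)"
  unfolding negligible_outer_le
proof (intro allI impI)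
  fix e :: real assume e: "e > 0"
  let ?\<mu> = "measure lebesgue"
  let ?B = "\<lambda>i. ball (fst i) (snd i)"
  obtain W where W: "open W" "S \<subseteq> W" "W - S \<in> lmeasurable"
    and "emeasure lebesgue (W - S) < ennreal (e * t)"
    using sets_lebesgue_outer_open[OF S, of "e * t"] e t by auto
  then have muW: "?\<mu> (W - S) \<le> e * t"
    using e t by (simp add: measure_def enn2real_leI less_imp_le)
  obtain C where C: "countable C"
      "C \<subseteq> {(x, r). 0 < r \<and> ball x r \<subseteq> W \<and> ?\<mu> (S \<inter> ball x r) \<le> (1 - t) * ?\<mu> (ball x r)}"
    and disj: "pairwise (\<lambda>i j. disjnt (?B i) (?B j)) C"
    and neg: "negligible (low_density_points S t - (\<Union>i\<in>C. ?B i))"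
    using low_density_points_Vitali_cover[OF W(1,2)] by blast
  \<comment> \<open>each ball loses the fraction \<open>t\<close> of its measure to \<open>W - S\<close>\<close>
  have small: "?\<mu> (\<Union>i\<in>I. ?B i) \<le> e" if I: "I \<subseteq> C" "finite I" for I
  proof -
    have "t * ?\<mu> (\<Union>i\<in>I. ?B i) \<le> ?\<mu> ((\<Union>i\<in>I. ?B i) - S)"
      using I C by (intro measure_UN_low_density_le[OF S I(2)] pairwise_subset[OF disj]) auto
    also have "\<dots> \<le> ?\<mu> (W - S)"
    proof (rule measure_mono_fmeasurable[OF _ _ W(3)])
      show "(\<Union>i\<in>I. ?B i) - S \<subseteq> W - S" using I C by fastforce
      show "(\<Union>i\<in>I. ?B i) - S \<in> sets lebesgue" using I(2) S by (intro sets.Diff sets.finite_UN) auto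
    qed
    finally have "t * ?\<mu> (\<Union>i\<in>I. ?B i) \<le> t * e"
      using muW by (simp add: mult.commute)
    then show ?thesis using t by simp
  qed
  have U: "(\<Union>i\<in>C. ?B i) \<in> lmeasurable" "?\<mu> (\<Union>i\<in>C. ?B i) \<le> e"
    using fmeasurable_UN_bound[OF C(1) _ small] measure_UN_bound[OF C(1) _ small] by auto
  obtain T where "low_density_points S t \<subseteq> T" "T \<in> lmeasurable" "?\<mu> T = ?\<mu> (\<Union>i\<in>C. ?B i)"
    using lmeasurable_superset_if_negligible_Diff[OF neg U(1)] .
  with U(2) show "\<exists>T. low_density_points S t \<subseteq> T \<and> T \<in> lmeasurable \<and> ?\<mu> T \<le> e"
    by auto
qed

lemma lebesgue_pointI:
  fixes S :: "'a::euclidean_space set"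
  assumes S: "S \<in> sets lebesgue" and x: "x \<in> S"
    and high: "\<And>t. t > 0 \<Longrightarrow> x \<notin> low_density_points S t"
  shows "lebesgue_point S x"
  unfolding lebesgue_point_def
proof (rule tendstoI)
  fix t :: real assume t: "t > 0"
  let ?\<mu> = "measure lebesgue"
  obtain d where d: "d > 0"
    and dens: "\<And>r. 0 < r \<Longrightarrow> r < d \<Longrightarrow> (1 - t) * ?\<mu> (ball x r) < ?\<mu> (S \<inter> ball x r)"
    using high[OF t] x by (force simp: low_density_points_def not_le)
  show "\<forall>\<^sub>F r in at_right 0. dist (?\<mu> (S \<inter> ball x r) / ?\<mu> (ball x r)) 1 < t"
    unfolding eventually_at_right_field
  proof (intro exI[of _ d] conjI allI impI)
    fix r :: real assume r: "0 < r" "r < d"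
    have pos: "?\<mu> (ball x r) > 0" using r by (simp add: content_ball_pos)
    have "?\<mu> (S \<inter> ball x r) \<le> ?\<mu> (ball x r)"
      using S by (intro measure_mono_fmeasurable) auto
    then have "?\<mu> (S \<inter> ball x r) / ?\<mu> (ball x r) \<le> 1"
      using pos by simp
    moreover have "1 - t < ?\<mu> (S \<inter> ball x r) / ?\<mu> (ball x r)"
      using dens[OF r] pos by (simp add: field_simps)
    ultimately show "dist (?\<mu> (S \<inter> ball x r) / ?\<mu> (ball x r)) 1 < t"
      unfolding dist_real_def abs_less_iff by linarith
  qed (use d in auto)
qed

lemma negligible_not_lebesgue_point:
  fixes S :: "'a::euclidean_space set"
  assumes S: "S \<in> sets lebesgue"
  shows "negligible {x\<in>S. \<not> lebesgue_point S x}"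
proof (rule negligible_subset)
  show "negligible (\<Union>n. low_density_points S (1 / Suc n))"
    using S by (intro negligible_Union_nat negligible_low_density_points) auto
  show "{x\<in>S. \<not> lebesgue_point S x} \<subseteq> (\<Union>n. low_density_points S (1 / Suc n))"
  proof clarify
    fix x assume "x \<in> S" "\<not> lebesgue_point S x"
    then obtain t where t: "t > 0" "x \<in> low_density_points S t"
      using lebesgue_pointI[OF S] by blast
    obtain n where "1 / Suc n < t"
      using reals_Archimedean[OF t(1)] by (auto simp: divide_inverse)
    then show "x \<in> (\<Union>n. low_density_points S (1 / Suc n))"
      using t low_density_points_antimono[of "1 / Suc n" t S] by auto
  qed
qed

lemma set_integral_null_sets:
  assumes "A \<in> null_sets M"
  shows "(LINT x:A|M. f x) = 0"
proof -
  have "AE x in M. indicator A x *\<^sub>R f x = 0"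
    using AE_not_in[OF assms] by eventually_elim simp
  then show ?thesis
    unfolding set_lebesgue_integral_def by (rule integral_eq_zero_AE)
qed

lemma set_integral_inner_right:
  fixes f :: "'a \<Rightarrow> 'b::euclidean_space"
  assumes "set_integrable M A f"
  shows "set_integrable M A (\<lambda>x. c \<bullet> f x)"
    and "(LINT x:A|M. c \<bullet> f x) = c \<bullet> (LINT x:A|M. f x)"
proof -
  have eq: "(\<lambda>x. indicator A x *\<^sub>R (c \<bullet> f x)) = (\<lambda>x. c \<bullet> (indicator A x *\<^sub>R f x))"
    by (simp add: inner_scaleR_right)
  have int: "integrable M (\<lambda>x. indicator A x *\<^sub>R f x)"
    using assms by (simp add: set_integrable_def)
  show "set_integrable M A (\<lambda>x. c \<bullet> f x)"
    unfolding set_integrable_def eq by (rule integrable_inner_right) (rule int)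
  show "(LINT x:A|M. c \<bullet> f x) = c \<bullet> (LINT x:A|M. f x)"
    unfolding set_lebesgue_integral_def eq by (rule integral_inner_right) (rule int)
qed

lemma set_integrable_id_bounded_off_null:
  fixes X N :: "'a::euclidean_space set"
  assumes X: "X \<in> lmeasurable" and N: "negligible N" and bdd: "bounded (X - N)"
  shows "set_integrable lebesgue X (\<lambda>x. x)"
proof -
  obtain K where K: "\<And>x. x \<in> X - N \<Longrightarrow> norm x \<le> K"
    using bdd by (auto simp: bounded_iff)
  have "AE x in lebesgue. x \<notin> N"
    using N by (intro AE_not_in) (simp add: negligible_iff_null_sets)
  then have "AE x in lebesgue. x \<in> X \<longrightarrow> norm (indicator X x *\<^sub>R x) \<le> K"
    by eventually_elim (use K in auto)
  moreover have "(\<lambda>x. indicator X x *\<^sub>R x) \<in> borel_measurable lebesgue"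
    using X by (intro borel_measurable_scaleR borel_measurable_indicator) (auto simp: id_def[symmetric])
  ultimately show ?thesis
    using X unfolding set_integrable_def
    by (intro integrableI_bounded_set[where A = X and B = K]) (auto simp: fmeasurable_def)
qed

lemma set_integral_cross_le:
  fixes f :: "'a \<Rightarrow> real"
  assumes A: "A \<in> sets M" "emeasure M A < \<infinity>" and B: "B \<in> sets M" "emeasure M B < \<infinity>"
    and fA: "set_integrable M A f" and fB: "set_integrable M B f"
    and gap: "AE x in M. x \<in> A \<longrightarrow> (AE y in M. y \<in> B \<longrightarrow> f x \<le> f y + D)"
  shows "measure M B * (LINT x:A|M. f x) \<le> measure M A * ((LINT y:B|M. f y) + measure M B * D)"
proof -
  let ?c = "(LINT y:B|M. f y) + measure M B * D"
  have const: "set_integrable M X (\<lambda>_. c)" if "X \<in> sets M" "emeasure M X < \<infinity>" for X and c :: real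
    using that by (simp add: set_integrable_def)
  have "AE x in M. x \<in> A \<longrightarrow> measure M B * f x \<le> ?c"
    using gap
  proof eventually_elim
    case (elim x)
    show ?case
    proof
      assume "x \<in> A"
      with elim have "AE y in M. y \<in> B \<longrightarrow> f x \<le> f y + D" by blast
      then have "(LINT y:B|M. f x) \<le> (LINT y:B|M. f y + D)"
        using B fB const by (intro set_integral_mono_AE) auto
      then show "measure M B * f x \<le> ?c"
        using B fB const by (simp add: set_integral_const)
    qed
  qed
  then have "(LINT x:A|M. measure M B * f x) \<le> (LINT x:A|M. ?c)"
    using A fA const by (intro set_integral_mono_AE) auto
  then show ?thesis
    using A by (simp add: set_integral_const)
qed

lemma norm_set_integral_diff_le:
  fixes A B N :: "'a::euclidean_space set" and M :: "'a measure"
  assumes A: "A \<in> sets M" "emeasure M A < \<infinity>" and B: "B \<in> sets M" "emeasure M B < \<infinity>"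
    and AB: "measure M A = measure M B"
    and iA: "set_integrable M A (\<lambda>x. x)" and iB: "set_integrable M B (\<lambda>x. x)"
    and N: "N \<in> null_sets M" and dist: "\<And>x y. x \<in> A - N \<Longrightarrow> y \<in> B - N \<Longrightarrow> dist x y \<le> D"
  shows "norm ((LINT x:A|M. x) - (LINT x:B|M. x)) \<le> measure M A * D"
proof (cases "measure M A = 0")
  case True
  then have "A \<in> null_sets M" "B \<in> null_sets M"
    using A B AB by (auto simp: emeasure_eq_ennreal_measure intro!: null_setsI)
  then show ?thesis using True by (simp add: set_integral_null_sets)
next
  case False
  then have m: "measure M A > 0" by (simp add: zero_less_measure_iff)
  define v where "v = (LINT x:A|M. x) - (LINT x:B|M. x)"
  define u where "u = sgn v"
  have "AE x in M. x \<in> A \<longrightarrow> (AE y in M. y \<in> B \<longrightarrow> u \<bullet> x \<le> u \<bullet> y + D)"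
    using AE_not_in[OF N]
  proof eventually_elim
    case (elim x)
    note x_off_N = elim
    show ?case
      using AE_not_in[OF N]
    proof (intro impI, eventually_elim)
      case (elim y)
      have "u \<bullet> x - u \<bullet> y \<le> norm u * norm (x - y)"
        by (metis inner_diff_right norm_cauchy_schwarz)
      also have "\<dots> \<le> dist x y"
        by (simp add: norm_sgn u_def dist_norm)
      finally show ?case
        using dist[of x y] x_off_N elim by auto
    qed
  qed
  with A B iA iB have "measure M B * (LINT x:A|M. u \<bullet> x)
      \<le> measure M A * ((LINT y:B|M. u \<bullet> y) + measure M B * D)"
    by (intro set_integral_cross_le set_integral_inner_right(1))
  then have "(LINT x:A|M. u \<bullet> x) \<le> (LINT y:B|M. u \<bullet> y) + measure M A * D"
    using m unfolding AB by (simp only: mult_le_cancel_left_pos)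
  moreover have "u \<bullet> v = norm v"
    by (cases "v = 0") (simp_all add: u_def sgn_div_norm dot_square_norm power2_eq_square)
  ultimately show ?thesis
    using iA iB by (simp add: v_def inner_diff_right set_integral_inner_right(2))
qed

lemma set_integral_diff_eq_Diff:
  fixes f :: "_ \<Rightarrow> _ :: {banach, second_countable_topology}"
  assumes A: "A \<in> sets M" and B: "B \<in> sets M"
    and fA: "set_integrable M A f" and fB: "set_integrable M B f"
  shows "(LINT x:A|M. f x) - (LINT x:B|M. f x) = (LINT x:A - B|M. f x) - (LINT x:B - A|M. f x)"
proof -
  have split: "(LINT x:X|M. f x) = (LINT x:X - Y|M. f x) + (LINT x:X \<inter> Y|M. f x)"
    if "X \<in> sets M" "Y \<in> sets M" "set_integrable M X f" for X Y
  proof -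
    have "(LINT x:(X - Y) \<union> (X \<inter> Y)|M. f x) = (LINT x:X - Y|M. f x) + (LINT x:X \<inter> Y|M. f x)"
      using that by (intro set_integral_Un set_integrable_subset[OF that(3)]) auto
    moreover have "(X - Y) \<union> (X \<inter> Y) = X" by blast
    ultimately show ?thesis by simp
  qed
  show ?thesis
    using split[OF A B fA] split[OF B A fB] by (simp add: Int_commute)
qed

lemma norm_bar_diff_le:
  fixes G H N :: "'a::euclidean_space set"
  assumes G: "G \<in> lmeasurable" and H: "H \<in> lmeasurable"
    and GH: "measure lebesgue G = measure lebesgue H" and N: "negligible N"
    and dist: "\<And>x y. x \<in> G \<union> H - N \<Longrightarrow> y \<in> G \<union> H - N \<Longrightarrow> dist x y \<le> D"
  shows "measure lebesgue G * norm (bar G - bar H) \<le> measure lebesgue (G - H) * D"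
proof (cases "measure lebesgue G = 0")
  case True
  have "measure lebesgue (G - H) \<le> measure lebesgue G"
    using G H by (intro measure_mono_fmeasurable) auto
  then have "measure lebesgue (G - H) = 0"
    using True measure_nonneg[of lebesgue "G - H"] by linarith
  with True show ?thesis by simp
next
  case False
  let ?\<mu> = "measure lebesgue" and ?I = "\<lambda>X. LINT x:X|lebesgue. x"
  have bdd: "bounded (G \<union> H - N)"
    unfolding bounded_two_points using dist by blast
  have int: "set_integrable lebesgue X (\<lambda>x. x)" if "X \<in> lmeasurable" "X \<subseteq> G \<union> H" for X
  proof (rule set_integrable_id_bounded_off_null[OF that(1) N])
    show "bounded (X - N)"
      using bdd by (rule bounded_subset) (use that(2) in blast)
  qed
  have GH_meas: "G - H \<in> lmeasurable" "H - G \<in> lmeasurable"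
    using G H by (auto intro: fmeasurable_Diff)
  have "?I G - ?I H = ?I (G - H) - ?I (H - G)"
    using G H by (intro set_integral_diff_eq_Diff int) auto
  also have "norm \<dots> \<le> ?\<mu> (G - H) * D"
  proof (rule norm_set_integral_diff_le)
    show "N \<in> null_sets lebesgue" using N by (simp add: negligible_iff_null_sets)
    show "?\<mu> (G - H) = ?\<mu> (H - G)" using G H GH by (rule measure_Diff_commute)
    show "set_integrable lebesgue (G - H) (\<lambda>x. x)" "set_integrable lebesgue (H - G) (\<lambda>x. x)"
      using GH_meas by (auto intro!: int)
    show "dist x y \<le> D" if "x \<in> G - H - N" "y \<in> H - G - N" for x y
      using that dist by blast
  qed (use GH_meas in \<open>auto simp: fmeasurable_def\<close>)
  moreover have "bar G - bar H = (1 / ?\<mu> G) *\<^sub>R (?I G - ?I H)"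
    unfolding bar_def GH by (simp add: scaleR_diff_right)
  ultimately show ?thesis
    using False by simp
qed

lemma bar_dist_le_measure_symdiff:
  fixes G H N :: "'a::euclidean_space set"
  assumes G: "G \<in> lmeasurable" and H: "H \<in> lmeasurable"
    and GH: "measure lebesgue G = measure lebesgue H" and N: "negligible N"
    and dist: "\<And>x y. x \<in> G \<union> H - N \<Longrightarrow> y \<in> G \<union> H - N \<Longrightarrow> dist x y \<le> D"
  shows "2 * measure lebesgue G / D * norm (bar G - bar H) \<le> measure lebesgue (symdiff G H)"
proof (cases "D > 0")
  case True
  let ?\<mu> = "measure lebesgue"
  have "2 * ?\<mu> G / D * norm (bar G - bar H) = 2 * (?\<mu> G * norm (bar G - bar H)) / D"
    by simp
  also have "\<dots> \<le> 2 * (?\<mu> (G - H) * D) / D"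
    using norm_bar_diff_le[OF assms] True by (intro divide_right_mono mult_left_mono) auto
  also have "\<dots> = ?\<mu> (symdiff G H)"
    using True measure_symdiff_eq_double[OF G H GH] by simp
  finally show ?thesis .
next
  case False
  then have "2 * measure lebesgue G / D * norm (bar G - bar H) \<le> 0"
    by (intro mult_nonpos_nonneg divide_nonneg_nonpos) auto
  then show ?thesis
    using measure_nonneg[of lebesgue "symdiff G H"] by linarith
qed

theorem lemma2p4:
  fixes G H Ht :: "'a::euclidean_space set" and D' :: real
  assumes "G \<in> sets lebesgue" "H \<in> sets lebesgue" "Ht \<in> sets lebesgue"
    and "emeasure lebesgue G < \<infinity>" "emeasure lebesgue H < \<infinity>" "emeasure lebesgue Ht < \<infinity>"
    and "measure lebesgue G > 0"
    and "measure lebesgue Ht = measure lebesgue G"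
    and "measure lebesgue (symdiff H Ht) = \<bar>measure lebesgue H - measure lebesgue G\<bar>"
    and "bdd_above (lp_dists (G \<union> Ht))"
    and "D' = ess_diam (G \<union> Ht)"
  shows "2 * measure lebesgue (symdiff G H) \<ge> measure lebesgue (symdiff G Ht) \<and>
         measure lebesgue (symdiff G Ht) \<ge> 2 * measure lebesgue G / D' * norm (bar G - bar Ht)"
proof
  have G: "G \<in> lmeasurable" and H: "H \<in> lmeasurable" and Ht: "Ht \<in> lmeasurable"
    using assms(1-6) by (auto simp: fmeasurable_def)
  show "measure lebesgue (symdiff G Ht) \<le> 2 * measure lebesgue (symdiff G H)"
    using measure_symdiff_triangle[OF G H Ht] abs_measure_diff_le_measure_symdiff[OF G H]
      abs_minus_commute[of "measure lebesgue G" "measure lebesgue H"] assms(9) by linarith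
  define N where "N = {x \<in> G \<union> Ht. \<not> lebesgue_point (G \<union> Ht) x}"
  have "negligible N"
    unfolding N_def using assms(1,3) by (intro negligible_not_lebesgue_point) auto
  moreover have "dist x y \<le> D'" if "x \<in> G \<union> Ht - N" "y \<in> G \<union> Ht - N" for x y
  proof -
    have "dist x y \<in> lp_dists (G \<union> Ht)"
      using that unfolding lp_dists_def N_def by blast
    then show ?thesis
      unfolding assms(11) ess_diam_def using assms(10) by (rule cSup_upper)
  qed
  ultimately show "2 * measure lebesgue G / D' * norm (bar G - bar Ht) \<le> measure lebesgue (symdiff G Ht)"
    using G Ht assms(8) by (intro bar_dist_le_measure_symdiff) auto
qed

end
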